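(* Let $\Omega\subset\mathbb{R}$ be an open nonempty set such that $$\Omega = \bigoplus_{k=1}^m\Omega := \{y_1+\dots+y_m : y_k\in\Omega,\ 1\leq k\leq m\}$$ for some integer $m\geq 2$. Then $\Omega\in\{(0,+\infty),\ (-\infty,0),\ \mathbb{R}\}$. *)

theory Defs
  imports "HOL-Analysis.Analysis"
begin

definition msum :: "nat \<Rightarrow> real set \<Rightarrow> real set" where
  "msum m A = {(\<Sum>k\<in>{1..m}. y k) | y. \<forall>k\<in>{1..m}. y k \<in> A}"

end

theory Submission
  imports Defs
begin

(*
  If Omega is closed under m-fold sums, nesting such sums gives a p + b q in Omega for p, q in
  Omega whenever a + b = 1 + j (m - 1); perturbing p and q inside balls contained in Omega, Omega
  contains the ball of radius (a + b) e around a p + b q. If 0 is in Omega these balls around 0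
  exhaust the line. If Omega meets both half-lines, some a u + b v with u < 0 < v lies so close
  to 0 that 0 is in such a ball. If Omega lies in the negative half-line, the inclusion of Omega
  in its m-fold sum set forces sup Omega = 0 (otherwise every m-fold sum lies below
  m sup Omega < sup Omega); then every y < 0 is reached as x' + j (m - 1) z with z in Omega close
  to 0 and x' in a ball around a point x > y of Omega. The positive case follows by reflection.
*)

lemma pair_combination_in_msum:
  fixes A :: "real set"
  assumes "p \<in> A" "q \<in> A" "r \<in> A" "c + d + 1 = m"
  shows "real c * p + real d * q + r \<in> msum m A"
proof -
  define y where "y k = (if k \<le> c then p else if k \<le> c + d then q else r)" for k
  have "(\<Sum>k\<in>{1..m}. y k) = (\<Sum>k\<in>{1..c+d}. y k) + y m"
    using assms(4) by auto
  also have "(\<Sum>k\<in>{1..c+d}. y k) = (\<Sum>k\<in>{1..c}. y k) + (\<Sum>k\<in>{c+1..c+d}. y k)"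
    by (rule sum.ub_add_nat) simp
  also have "(\<Sum>k\<in>{c+1..c+d}. y k) = (\<Sum>k\<in>{c+1..c+d}. q)"
    by (rule sum.cong) (auto simp: y_def)
  also have "y m = r"
    using assms(4) by (simp add: y_def)
  also have "(\<Sum>k\<in>{1..c}. y k) + (\<Sum>k\<in>{c+1..c+d}. q) + r = real c * p + real d * q + r"
    by (simp add: y_def)
  finally have "real c * p + real d * q + r = (\<Sum>k\<in>{1..m}. y k)" ..
  moreover have "\<forall>k\<in>{1..m}. y k \<in> A"
    using assms by (simp add: y_def)
  ultimately show ?thesis
    unfolding msum_def by blast
qed

lemma msum_le:
  fixes A :: "real set"
  assumes "\<forall>a\<in>A. a \<le> t" "x \<in> msum m A"
  shows "x \<le> real m * t"
proof -
  obtain y where "\<forall>k\<in>{1..m}. y k \<in> A" "x = (\<Sum>k\<in>{1..m}. y k)"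
    using assms(2) unfolding msum_def by blast
  moreover have "(\<Sum>k\<in>{1..m}. y k) \<le> (\<Sum>k\<in>{1..m}. t)"
    using calculation assms(1) by (intro sum_mono) auto
  ultimately have "x \<le> (\<Sum>k\<in>{1..m}. t)" by simp
  then show ?thesis by simp
qed

lemma msum_uminus:
  fixes A :: "real set"
  shows "msum m (uminus ` A) = uminus ` msum m A"
proof -
  have sub: "uminus ` msum m B \<subseteq> msum m (uminus ` B)" for B :: "real set"
  proof
    fix x assume "x \<in> uminus ` msum m B"
    then obtain y where "\<forall>k\<in>{1..m}. y k \<in> B" "x = - (\<Sum>k\<in>{1..m}. y k)"
      unfolding msum_def by blast
    then have "\<forall>k\<in>{1..m}. - y k \<in> uminus ` B" "x = (\<Sum>k\<in>{1..m}. - y k)"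
      by (auto simp: sum_negf)
    then show "x \<in> msum m (uminus ` B)" unfolding msum_def by blast
  qed
  have "msum m (uminus ` A) = uminus ` uminus ` msum m (uminus ` A)"
    by (simp add: image_image)
  also have "\<dots> \<subseteq> uminus ` msum m A"
    using sub[of "uminus ` A"] by (intro image_mono) (simp add: image_image)
  finally show ?thesis using sub[of A] by blast
qed

lemma msum_supset_Sup_nonneg:
  fixes A :: "real set"
  assumes "A \<subseteq> msum m A" and "m \<ge> 2" and "A \<noteq> {}" and "bdd_above A"
  shows "Sup A \<ge> 0"
proof (rule ccontr)
  assume "\<not> Sup A \<ge> 0"
  have "\<forall>x\<in>A. x \<le> Sup A"
    using assms(4) by (auto intro: cSup_upper)
  then have "\<forall>x\<in>A. x \<le> real m * Sup A"
    using msum_le assms(1) by blast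
  then have "Sup A \<le> real m * Sup A"
    using assms(3) by (auto intro: cSup_least)
  moreover have "real m * Sup A < Sup A"
    using \<open>\<not> Sup A \<ge> 0\<close> assms(2) by (simp add: mult_less_cancel_right1)
  ultimately show False by simp
qed

lemma msum_closed_combination:
  fixes A :: "real set"
  assumes sum_closed: "msum m A \<subseteq> A" and "p \<in> A" "q \<in> A"
  shows "a + b = 1 + j * (m - 1) \<Longrightarrow> real a * p + real b * q \<in> A"
proof (induction j arbitrary: a b)
  case 0
  then have "(a = 1 \<and> b = 0) \<or> (a = 0 \<and> b = 1)" by auto
  then show ?case using assms by auto
next
  case (Suc j)
  show ?case
  proof (cases "m = 0")
    case True
    then show ?thesis using Suc by simp
  next
    case False
    define c where "c = min a (m - 1)"
    define d where "d = m - 1 - c"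
    have cd: "c + d + 1 = m" and "c \<le> a" "d \<le> b"
      using False Suc.prems by (auto simp: c_def d_def)
    have "(a - c) + (b - d) = 1 + j * (m - 1)"
      using Suc.prems cd \<open>c \<le> a\<close> \<open>d \<le> b\<close> by simp
    then have "real (a - c) * p + real (b - d) * q \<in> A"
      by (rule Suc.IH)
    then have "real c * p + real d * q + (real (a - c) * p + real (b - d) * q) \<in> A"
      using pair_combination_in_msum[OF assms(2,3) _ cd] sum_closed by blast
    then show ?thesis
      using \<open>c \<le> a\<close> \<open>d \<le> b\<close> by (simp add: algebra_simps)
  qed
qed

lemma msum_closed_ball:
  fixes A :: "real set"
  assumes sum_closed: "msum m A \<subseteq> A" and "ball u e \<subseteq> A" "ball v e \<subseteq> A"
    and n: "a + b = 1 + j * (m - 1)"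
  shows "ball (real a * u + real b * v) (real (a + b) * e) \<subseteq> A"
proof
  fix w assume "w \<in> ball (real a * u + real b * v) (real (a + b) * e)"
  then have w: "\<bar>w - (real a * u + real b * v)\<bar> < real (a + b) * e"
    by (simp add: dist_real_def abs_minus_commute)
  define \<delta> where "\<delta> = (w - (real a * u + real b * v)) / real (a + b)"
  have "a + b > 0" using n by simp
  then have pos: "real (a + b) > 0" by linarith
  then have "\<bar>\<delta>\<bar> < e"
    using w by (simp add: \<delta>_def abs_divide field_simps)
  then have "u + \<delta> \<in> A" "v + \<delta> \<in> A"
    using assms(2,3) by (auto simp: dist_real_def)
  then have "real a * (u + \<delta>) + real b * (v + \<delta>) \<in> A"
    using msum_closed_combination[OF sum_closed _ _ n] by blast
  moreover have "real a * (u + \<delta>) + real b * (v + \<delta>) = real a * u + real b * v + real (a + b) * \<delta>"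
    by (simp add: algebra_simps)
  moreover have "real (a + b) * \<delta> = w - (real a * u + real b * v)"
    using pos by (simp add: \<delta>_def)
  ultimately show "w \<in> A" by simp
qed

lemma ex_one_plus_mult_gt:
  assumes "m \<ge> 2"
  shows "\<exists>j. t < real (1 + j * (m - 1))"
proof
  have "t \<le> real (nat \<lceil>t\<rceil>)" by linarith
  also have "nat \<lceil>t\<rceil> * 1 \<le> nat \<lceil>t\<rceil> * (m - 1)"
    using assms by (intro mult_le_mono2) simp
  then have "real (nat \<lceil>t\<rceil>) \<le> real (nat \<lceil>t\<rceil> * (m - 1))"
    by (simp only: of_nat_le_iff mult_1_right)
  finally show "t < real (1 + nat \<lceil>t\<rceil> * (m - 1))" by simp
qed

lemma ex_nat_mult_bracket:
  fixes s x :: real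
  assumes "s > 0" "x \<ge> 0"
  obtains j :: nat where "real j * s \<le> x" "x < real j * s + s"
proof -
  define j where "j = nat \<lfloor>x / s\<rfloor>"
  have "x / s \<ge> 0" using assms by simp
  then have "real j \<le> x / s" "x / s < real j + 1"
    unfolding j_def by linarith+
  then show thesis
    using that assms by (simp add: pos_le_divide_eq pos_divide_less_eq distrib_right)
qed

lemma msum_closed_zero_UNIV:
  fixes A :: "real set"
  assumes "open A" and sum_closed: "msum m A \<subseteq> A" and "m \<ge> 2" and "0 \<in> A"
  shows "A = UNIV"
proof -
  obtain e where e: "e > 0" "ball 0 e \<subseteq> A"
    using assms(1,4) open_contains_ball by blast
  have "y \<in> A" for y
  proof -
    obtain j where j: "\<bar>y\<bar> / e < real (1 + j * (m - 1))"
      using ex_one_plus_mult_gt[OF \<open>m \<ge> 2\<close>] by blast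
    define n where "n = 1 + j * (m - 1)"
    have "ball (real n * 0 + real 0 * 0) (real (n + 0) * e) \<subseteq> A"
      using msum_closed_ball[OF sum_closed e(2) e(2), of n 0 j] by (simp add: n_def)
    moreover have "\<bar>y\<bar> < real n * e"
      using j e by (simp add: n_def pos_divide_less_eq)
    ultimately show "y \<in> A" by (auto simp: dist_real_def)
  qed
  then show ?thesis by blast
qed

lemma msum_closed_mixed_signs_zero:
  fixes A :: "real set"
  assumes "open A" and sum_closed: "msum m A \<subseteq> A" and "m \<ge> 2"
    and "u \<in> A" "u < 0" "v \<in> A" "v > 0"
  shows "0 \<in> A"
proof -
  obtain e\<^sub>u e\<^sub>v where "e\<^sub>u > 0" "ball u e\<^sub>u \<subseteq> A" "e\<^sub>v > 0" "ball v e\<^sub>v \<subseteq> A"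
    using assms(1,4,6) open_contains_ball by metis
  then obtain e where e: "e > 0" "ball u e \<subseteq> A" "ball v e \<subseteq> A"
    by (intro that[of "min e\<^sub>u e\<^sub>v"]) auto
  obtain j where j: "(v - u) / e < real (1 + j * (m - 1))"
    using ex_one_plus_mult_gt[OF \<open>m \<ge> 2\<close>] by blast
  define n where "n = 1 + j * (m - 1)"
  obtain a where a: "real a * (v - u) \<le> real n * v" "real n * v < real a * (v - u) + (v - u)"
    using ex_nat_mult_bracket[of "v - u" "real n * v"] assms(5,7) by auto
  have "real n * v \<le> real n * (v - u)"
    using assms(5) by (simp add: mult_left_mono)
  then have "real a * (v - u) \<le> real n * (v - u)"
    using a(1) by linarith
  then have "a \<le> n"
    using assms(5,7) by (simp add: mult_le_cancel_right_pos)
  define f where "f = real a * u + real (n - a) * v"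
  have f: "f = real n * v - real a * (v - u)"
    using \<open>a \<le> n\<close> by (simp add: f_def of_nat_diff algebra_simps)
  have "ball f (real n * e) \<subseteq> A"
    using msum_closed_ball[OF sum_closed e(2,3), of a "n - a" j] \<open>a \<le> n\<close> by (simp add: f_def n_def)
  moreover have "\<bar>f\<bar> < real n * e"
    using a f j e(1) by (simp add: n_def pos_divide_less_eq)
  ultimately show "0 \<in> A" by (simp add: subset_eq dist_real_def)
qed

lemma msum_eq_subset_negative:
  fixes A :: "real set"
  assumes "open A" and eq: "msum m A = A" and "m \<ge> 2" and "A \<noteq> {}" and neg: "A \<subseteq> {..<0}"
  shows "A = {..<0}"
proof -
  have bdd: "bdd_above A"
    using neg by (intro bdd_aboveI[of _ 0]) auto
  have "Sup A \<ge> 0"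
    using msum_supset_Sup_nonneg[of A m] eq assms(3,4) bdd by simp
  then have near: "\<exists>x\<in>A. t < x" if "t < 0" for t
    using less_cSup_iff[OF assms(4) bdd, of t] that by simp
  have "y \<in> A" if "y < 0" for y
  proof -
    obtain x where x: "x \<in> A" "y < x"
      using near \<open>y < 0\<close> by blast
    obtain e where e: "e > 0" "ball x e \<subseteq> A"
      using \<open>open A\<close> x(1) open_contains_ball by blast
    have "real (m - 1) \<ge> 1" using \<open>m \<ge> 2\<close> by simp
    then obtain z where z: "z \<in> A" "- e / real (m - 1) < z"
      using near[of "- e / real (m - 1)"] e(1) by auto
    define s where "s = real (m - 1) * - z"
    have "0 < s" "s < e"
      using z neg \<open>real (m - 1) \<ge> 1\<close> by (auto simp: s_def field_simps)
    then obtain j where j: "real j * s \<le> x - y" "x - y < real j * s + s"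
      using ex_nat_mult_bracket[of s "x - y"] x(2) by auto
    have "y + real j * s \<in> A"
      using e(2) j \<open>s < e\<close> by (auto simp: dist_real_def)
    then have "real 1 * (y + real j * s) + real (j * (m - 1)) * z \<in> A"
      using msum_closed_combination[of m A "y + real j * s" z 1 "j * (m - 1)" j] eq z(1) by simp
    then show "y \<in> A"
      by (simp only: of_nat_mult of_nat_1 s_def) (simp add: algebra_simps)
  qed
  then show ?thesis using neg by blast
qed

lemma msum_eq_subset_positive:
  fixes A :: "real set"
  assumes "open A" and "msum m A = A" and "m \<ge> 2" and "A \<noteq> {}" and "A \<subseteq> {0<..}"
  shows "A = {0<..}"
proof -
  have "uminus ` A = {..<0}"
    using assms by (intro msum_eq_subset_negative) (auto simp: msum_uminus open_negations)
  then have "uminus ` uminus ` A = {0<..}"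
    by simp
  then show ?thesis
    by (simp add: image_image)
qed

theorem lemma5p1:
  fixes \<Omega> :: "real set" and m :: nat
  assumes "open \<Omega>" and "\<Omega> \<noteq> {}" and "m \<ge> 2"
    and "\<Omega> = msum m \<Omega>"
  shows "\<Omega> = {0<..} \<or> \<Omega> = {..<0} \<or> \<Omega> = UNIV"
proof -
  have eq: "msum m \<Omega> = \<Omega>" and sum_closed: "msum m \<Omega> \<subseteq> \<Omega>"
    using assms(4) by simp_all
  consider "0 \<in> \<Omega>" | "\<Omega> \<subseteq> {..<0}" | "\<Omega> \<subseteq> {0<..}"
    | u v where "u \<in> \<Omega>" "u < 0" "v \<in> \<Omega>" "v > 0"
    unfolding subset_eq by (metis greaterThan_iff lessThan_iff linorder_neqE_linordered_idom)
  then show ?thesis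
  proof cases
    case 1
    then show ?thesis using msum_closed_zero_UNIV[OF assms(1) sum_closed assms(3)] by blast
  next
    case 2
    then show ?thesis using msum_eq_subset_negative[OF assms(1) eq assms(3,2)] by blast
  next
    case 3
    then show ?thesis using msum_eq_subset_positive[OF assms(1) eq assms(3,2)] by blast
  next
    case 4
    then show ?thesis using msum_closed_mixed_signs_zero[OF assms(1) sum_closed assms(3)]
      msum_closed_zero_UNIV[OF assms(1) sum_closed assms(3)] by blast
  qed
qed

end
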